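(* Let $\mathcal{C}$ be a permutation class with bounded horizontal path-width. Then there is a constant $\alpha$ depending only on $\mathcal{C}$ such that for every $\pi\in\mathcal{C}$ and every subset $S$ of the diagram of $\pi$, we have $\mathrm{intv}_y(S)\le\alpha\cdot\mathrm{intv}_x(S)$.
   Context: Permutations of length $n$ are identified with their diagrams $\{(i,\pi_i)\}$; a permutation class is a set of permutations closed under pattern containment. The intervalicity of $A\subseteq[n]$ is the least number of disjoint integer intervals with union $A$; for a point set $S$, $\mathrm{intv}_x(S)$ and $\mathrm{intv}_y(S)$ denote the intervalicities of its projections onto the $x$- and $y$-axes, and its grid-complexity is their maximum. The horizontal path-width of $\pi$ is the maximum over $i\in[n]$ of the grid-complexity of $\{(1,\pi_1),\dots,(i,\pi_i)\}$; $\mathcal{C}$ has bounded horizontal path-width if this is bounded over all $\pi\in\mathcal{C}$. *)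

theory Defs
  imports Complex_Main "HOL-Combinatorics.Permutations"
begin

text \<open>A permutation of length n is a pair (n, p) with p permuting {1..n}
  (p is the identity outside {1..n}, so the representation is canonical).\<close>

definition is_perm :: "nat \<times> (nat \<Rightarrow> nat) \<Rightarrow> bool" where
  "is_perm \<pi> \<longleftrightarrow> snd \<pi> permutes {1..fst \<pi>}"

definition diagram :: "nat \<times> (nat \<Rightarrow> nat) \<Rightarrow> (nat \<times> nat) set" where
  "diagram \<pi> = {(i, snd \<pi> i) | i. i \<in> {1..fst \<pi>}}"

definition contains :: "nat \<times> (nat \<Rightarrow> nat) \<Rightarrow> nat \<times> (nat \<Rightarrow> nat) \<Rightarrow> bool" where
  "contains \<pi> \<sigma> \<longleftrightarrow> (\<exists>f. (\<forall>i\<in>{1..fst \<sigma>}. f i \<in> {1..fst \<pi>}) \<and>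
      (\<forall>i\<in>{1..fst \<sigma>}. \<forall>j\<in>{1..fst \<sigma>}. i < j \<longrightarrow> f i < f j) \<and>
      (\<forall>i\<in>{1..fst \<sigma>}. \<forall>j\<in>{1..fst \<sigma>}.
          snd \<pi> (f i) < snd \<pi> (f j) \<longleftrightarrow> snd \<sigma> i < snd \<sigma> j))"

definition perm_class :: "(nat \<times> (nat \<Rightarrow> nat)) set \<Rightarrow> bool" where
  "perm_class C \<longleftrightarrow> (\<forall>\<pi>\<in>C. is_perm \<pi>) \<and>
     (\<forall>\<pi>\<in>C. \<forall>\<sigma>. is_perm \<sigma> \<and> contains \<pi> \<sigma> \<longrightarrow> \<sigma> \<in> C)"

definition intervalicity :: "nat set \<Rightarrow> nat" where
  "intervalicity A = (LEAST k. \<exists>I :: nat \<Rightarrow> nat set.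
      (\<forall>j<k. \<exists>a b. I j = {a..b}) \<and> disjoint_family_on I {..<k} \<and> (\<Union>j<k. I j) = A)"

definition intv_x :: "(nat \<times> nat) set \<Rightarrow> nat" where
  "intv_x S = intervalicity (fst ` S)"

definition intv_y :: "(nat \<times> nat) set \<Rightarrow> nat" where
  "intv_y S = intervalicity (snd ` S)"

definition grid_complexity :: "(nat \<times> nat) set \<Rightarrow> nat" where
  "grid_complexity S = max (intv_x S) (intv_y S)"

definition hpw :: "nat \<times> (nat \<Rightarrow> nat) \<Rightarrow> nat" where
  "hpw \<pi> = Max (insert 0 ((\<lambda>i. grid_complexity {(j, snd \<pi> j) | j. j \<in> {1..i}}) ` {1..fst \<pi>}))"

definition bounded_hpw :: "(nat \<times> (nat \<Rightarrow> nat)) set \<Rightarrow> bool" where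
  "bounded_hpw C \<longleftrightarrow> (\<exists>B. \<forall>\<pi>\<in>C. hpw \<pi> \<le> B)"

end

theory Submission
  imports Defs
begin

text \<open>Since intervalicity counts the starts of the maximal runs of a set, it is
  subadditive under unions and under set differences. For a permutation \<pi> with
  horizontal path-width B, the image of a maximal run {s..e} of the x-projection
  of S is \<pi>([1,e]) - \<pi>([1,s-1]), which consists of at most 2B intervals; summing
  over the runs gives intv_y S \<le> 2B \<cdot> intv_x S.\<close>

definition run_starts :: "nat set \<Rightarrow> nat set" where
  "run_starts A = {x\<in>A. x = 0 \<or> x - 1 \<notin> A}"

definition interval_decomposable :: "nat set \<Rightarrow> nat \<Rightarrow> bool" where
  "interval_decomposable A k \<longleftrightarrow> (\<exists>I::nat\<Rightarrow>nat set. (\<forall>j<k. \<exists>a b. I j = {a..b}) \<and>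
      disjoint_family_on I {..<k} \<and> (\<Union>j<k. I j) = A)"

lemma finite_run_starts: "finite A \<Longrightarrow> finite (run_starts A)"
  by (simp add: run_starts_def)

lemma card_run_starts_le:
  assumes "interval_decomposable A k"
  shows "card (run_starts A) \<le> k"
proof -
  obtain I where I_intervals: "\<forall>j<k. \<exists>a b. I j = {a..b}" and I_union: "(\<Union>j<k. I j) = A"
    using assms interval_decomposable_def by auto
  have "\<forall>s\<in>run_starts A. \<exists>j<k. s \<in> I j" using I_union unfolding run_starts_def by auto
  then obtain f where f: "\<forall>s\<in>run_starts A. f s < k \<and> s \<in> I (f s)" by metis
  have start_is_left_end: "s = a"
    if "s \<in> run_starts A" "I j = {a..b}" "s \<in> I j" "j < k" for s j a b
  proof (rule ccontr)
    assume "s \<noteq> a"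
    then have "s - 1 \<in> I j" "s \<noteq> 0" using that by auto
    then have "s - 1 \<in> A" using I_union \<open>j < k\<close> by auto
    then show False using that(1) \<open>s \<noteq> 0\<close> unfolding run_starts_def by auto
  qed
  have "inj_on f (run_starts A)"
  proof (rule inj_onI)
    fix s t assume s: "s \<in> run_starts A" and t: "t \<in> run_starts A" and eq: "f s = f t"
    obtain a b where ab: "I (f s) = {a..b}" using I_intervals f s by blast
    have "s = a" using start_is_left_end[OF s ab] f s by auto
    moreover have "t = a" using start_is_left_end[OF t, of "f s" a b] ab f t eq by auto
    ultimately show "s = t" by simp
  qed
  moreover have "f ` run_starts A \<subseteq> {..<k}" using f by auto
  ultimately have "card (run_starts A) \<le> card {..<k}" by (intro card_inj_on_le) auto
  then show ?thesis by simp
qed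

text \<open>The decomposition is built left to right: a run start opens a new singleton
  interval, any other element extends the interval containing its predecessor.\<close>

lemma interval_decomposable_prefix:
  "interval_decomposable (A \<inter> {..<n}) (card (run_starts A \<inter> {..<n}))"
proof (induction n)
  case 0 show ?case unfolding interval_decomposable_def by (auto simp: disjoint_family_on_def)
next
  case (Suc n)
  define k where "k = card (run_starts A \<inter> {..<n})"
  obtain I where I_intervals: "\<forall>j<k. \<exists>a b. I j = {a..b}" and I_disj: "disjoint_family_on I {..<k}"
    and I_union: "(\<Union>j<k. I j) = A \<inter> {..<n}"
    using Suc unfolding interval_decomposable_def k_def by blast
  have I_below: "I j \<subseteq> A \<inter> {..<n}" if "j < k" for j using I_union that by blast
  consider "n \<notin> A" | "n \<in> run_starts A" | "n \<in> A" "n \<notin> run_starts A" by blast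
  then show ?case
  proof cases
    case 1
    then have "A \<inter> {..<Suc n} = A \<inter> {..<n}" "run_starts A \<inter> {..<Suc n} = run_starts A \<inter> {..<n}"
      by (auto simp: run_starts_def less_Suc_eq)
    then show ?thesis using Suc by simp
  next
    case 2
    have A_Suc: "A \<inter> {..<Suc n} = insert n (A \<inter> {..<n})"
      using 2 by (auto simp: run_starts_def less_Suc_eq)
    have "run_starts A \<inter> {..<Suc n} = insert n (run_starts A \<inter> {..<n})"
      using 2 by (auto simp: less_Suc_eq)
    then have card_Suc: "card (run_starts A \<inter> {..<Suc n}) = Suc k" unfolding k_def by simp
    define I' where "I' = I(k := {n..n})"
    have "\<forall>j<Suc k. \<exists>a b. I' j = {a..b}"
    proof (intro allI impI)
      fix j assume "j < Suc k"
      then show "\<exists>a b. I' j = {a..b}"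
        using I_intervals unfolding I'_def by (cases "j = k") (auto intro!: exI[of _ n])
    qed
    moreover have "disjoint_family_on I' {..<Suc k}"
      unfolding disjoint_family_on_def
    proof (intro ballI impI)
      fix i j assume ij: "i \<in> {..<Suc k}" "j \<in> {..<Suc k}" "i \<noteq> j"
      show "I' i \<inter> I' j = {}"
      proof (cases "i = k \<or> j = k")
        case True
        then show ?thesis using ij I_below unfolding I'_def by (auto simp: less_Suc_eq)
      next
        case False
        then show ?thesis
          using ij I_disj unfolding I'_def disjoint_family_on_def by (auto simp: less_Suc_eq)
      qed
    qed
    moreover have "(\<Union>j<Suc k. I' j) = A \<inter> {..<Suc n}"
    proof -
      have "(\<Union>j<Suc k. I' j) = I' k \<union> (\<Union>j<k. I' j)" by (simp add: lessThan_Suc)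
      also have "\<dots> = {n} \<union> (\<Union>j<k. I j)" unfolding I'_def by auto
      finally show ?thesis using A_Suc I_union by simp
    qed
    ultimately show ?thesis unfolding interval_decomposable_def card_Suc by blast
  next
    case 3
    have A_Suc: "A \<inter> {..<Suc n} = insert n (A \<inter> {..<n})" using 3 by (auto simp: less_Suc_eq)
    have starts_Suc: "run_starts A \<inter> {..<Suc n} = run_starts A \<inter> {..<n}"
      using 3 by (auto simp: less_Suc_eq)
    have "n > 0" "n - 1 \<in> A \<inter> {..<n}" using 3 by (auto simp: run_starts_def)
    then obtain j where j: "j < k" "n - 1 \<in> I j" using I_union by blast
    obtain a b where ab: "I j = {a..b}" using I_intervals j by blast
    have "b < n" using I_below[OF j(1)] ab j(2) by auto
    then have extend: "{a..n} = insert n (I j)" using ab j(2) \<open>n > 0\<close> by auto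
    define I' where "I' = I(j := {a..n})"
    have "\<forall>i<k. \<exists>a b. I' i = {a..b}" using I_intervals unfolding I'_def by auto
    moreover have "disjoint_family_on I' {..<k}"
      unfolding disjoint_family_on_def
    proof (intro ballI impI)
      fix i i' assume ii': "i \<in> {..<k}" "i' \<in> {..<k}" "i \<noteq> i'"
      have "I i \<inter> I i' = {}" using ii' I_disj unfolding disjoint_family_on_def by auto
      moreover have "n \<notin> I i" "n \<notin> I i'" using I_below ii' by auto
      ultimately show "I' i \<inter> I' i' = {}" using extend ii' unfolding I'_def by auto
    qed
    moreover have "(\<Union>i<k. I' i) = A \<inter> {..<Suc n}"
    proof -
      have "(\<Union>i<k. I' i) = insert n (\<Union>i<k. I i)"
        using j(1) extend unfolding I'_def by (auto split: if_splits)
      then show ?thesis unfolding A_Suc using I_union by simp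
    qed
    ultimately show ?thesis unfolding interval_decomposable_def starts_Suc k_def by blast
  qed
qed

lemma interval_decomposable_card_run_starts:
  assumes "finite A"
  shows "interval_decomposable A (card (run_starts A))"
proof -
  obtain n where "\<forall>x\<in>A. x < n" using assms finite_nat_set_iff_bounded by auto
  then have "A \<inter> {..<n} = A" "run_starts A \<inter> {..<n} = run_starts A"
    by (auto simp: run_starts_def)
  then show ?thesis using interval_decomposable_prefix[of A n] by simp
qed

lemma intervalicity_eq_card_run_starts:
  assumes "finite A"
  shows "intervalicity A = card (run_starts A)"
  unfolding intervalicity_def interval_decomposable_def[symmetric]
  by (rule Least_equality)
    (use interval_decomposable_card_run_starts[OF assms] card_run_starts_le in auto)

lemma run_start_below:
  "z \<in> A \<Longrightarrow> \<exists>s\<in>run_starts A. s \<le> z \<and> {s..z} \<subseteq> A"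
proof (induction z)
  case 0 then show ?case by (auto simp: run_starts_def)
next
  case (Suc z)
  show ?case
  proof (cases "Suc z \<in> run_starts A")
    case True then show ?thesis by (intro bexI[of _ "Suc z"]) (auto simp: run_starts_def)
  next
    case False
    then have "z \<in> A" using Suc.prems by (auto simp: run_starts_def)
    then obtain s where s: "s \<in> run_starts A" "s \<le> z" "{s..z} \<subseteq> A" using Suc.IH by blast
    then have "{s..Suc z} \<subseteq> A" using Suc.prems by (auto simp: le_Suc_eq)
    then show ?thesis using s by (meson le_SucI)
  qed
qed

definition run_ends :: "nat set \<Rightarrow> nat set" where
  "run_ends A = {y. y \<notin> A \<and> 0 < y \<and> y - 1 \<in> A}"

lemma finite_run_ends:
  assumes "finite A"
  shows "finite (run_ends A)"
proof -
  have "run_ends A \<subseteq> Suc ` A" unfolding run_ends_def by (auto simp: image_iff) (metis Suc_pred)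
  then show ?thesis using assms finite_subset by blast
qed

text \<open>Each run end is matched injectively with the start of the run it closes.\<close>

lemma card_run_ends_le:
  assumes "finite A"
  shows "card (run_ends A) \<le> card (run_starts A)"
proof -
  have "\<forall>y\<in>run_ends A. \<exists>s\<in>run_starts A. s \<le> y - 1 \<and> {s..y-1} \<subseteq> A"
    using run_start_below unfolding run_ends_def by blast
  then obtain g
    where g: "\<forall>y\<in>run_ends A. g y \<in> run_starts A \<and> g y \<le> y - 1 \<and> {g y..y-1} \<subseteq> A"
    by metis
  have no_end_inside: "\<not> (y < y')" if "y \<in> run_ends A" "y' \<in> run_ends A" "g y = g y'" for y y'
  proof
    assume "y < y'"
    then have "y \<in> {g y'..y'-1}" using g that by auto
    then show False using g that unfolding run_ends_def by blast
  qed
  have "inj_on g (run_ends A)"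
    by (rule inj_onI) (metis no_end_inside linorder_neqE_nat)
  moreover have "g ` run_ends A \<subseteq> run_starts A" using g by auto
  ultimately show ?thesis using finite_run_starts[OF assms] by (rule card_inj_on_le)
qed

lemma intervalicity_diff_le:
  assumes "finite A" "finite B"
  shows "intervalicity (A - B) \<le> intervalicity A + intervalicity B"
proof -
  have "run_starts (A - B) \<subseteq> run_starts A \<union> run_ends B"
    unfolding run_starts_def run_ends_def by auto
  then have "card (run_starts (A - B)) \<le> card (run_starts A \<union> run_ends B)"
    using assms by (simp add: card_mono finite_run_starts finite_run_ends)
  also have "\<dots> \<le> card (run_starts A) + card (run_ends B)" by (rule card_Un_le)
  also have "\<dots> \<le> card (run_starts A) + card (run_starts B)"
    using card_run_ends_le[OF assms(2)] by simp
  finally show ?thesis using assms by (simp add: intervalicity_eq_card_run_starts)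
qed

lemma intervalicity_UN_le:
  assumes "finite I" "\<And>i. i \<in> I \<Longrightarrow> finite (A i)"
  shows "intervalicity (\<Union>i\<in>I. A i) \<le> (\<Sum>i\<in>I. intervalicity (A i))"
proof -
  have "run_starts (\<Union>i\<in>I. A i) \<subseteq> (\<Union>i\<in>I. run_starts (A i))"
    unfolding run_starts_def by blast
  then have "card (run_starts (\<Union>i\<in>I. A i)) \<le> card (\<Union>i\<in>I. run_starts (A i))"
    using assms by (intro card_mono) (auto simp: finite_run_starts)
  also have "\<dots> \<le> (\<Sum>i\<in>I. card (run_starts (A i)))" by (rule card_UN_le[OF assms(1)])
  finally show ?thesis using assms by (simp add: intervalicity_eq_card_run_starts)
qed

definition maximal_run :: "nat set \<Rightarrow> nat \<Rightarrow> nat set" where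
  "maximal_run A s = {x. s \<le> x \<and> {s..x} \<subseteq> A}"

lemma maximal_run_subset: "maximal_run A s \<subseteq> A"
  unfolding maximal_run_def by auto

lemma UN_maximal_runs: "(\<Union>s\<in>run_starts A. maximal_run A s) = A"
  using run_start_below maximal_run_subset unfolding maximal_run_def by fastforce

lemma maximal_run_eq_atLeastAtMost:
  assumes "finite A" "s \<in> A"
  obtains e where "s \<le> e" "e \<in> A" "maximal_run A s = {s..e}"
proof -
  have fin: "finite (maximal_run A s)" using assms(1) maximal_run_subset finite_subset by blast
  have "s \<in> maximal_run A s" using assms(2) unfolding maximal_run_def by auto
  then have e: "Max (maximal_run A s) \<in> maximal_run A s" using fin by (intro Max_in) auto
  then have "maximal_run A s = {s..Max (maximal_run A s)}"
    using Max_ge[OF fin] unfolding maximal_run_def by auto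
  moreover have "s \<le> Max (maximal_run A s)" using e unfolding maximal_run_def by simp
  ultimately show ?thesis using e maximal_run_subset[of A s] that by blast
qed

lemma intervalicity_image_prefix_le_hpw:
  assumes "i \<le> fst \<pi>"
  shows "intervalicity (snd \<pi> ` {1..i}) \<le> hpw \<pi>"
proof (cases "i = 0")
  case True then show ?thesis by (simp add: intervalicity_eq_card_run_starts run_starts_def)
next
  case False
  have "snd ` {(j, snd \<pi> j) | j. j \<in> {1..i}} = snd \<pi> ` {1..i}" by force
  then have "intervalicity (snd \<pi> ` {1..i}) \<le> grid_complexity {(j, snd \<pi> j) | j. j \<in> {1..i}}"
    unfolding grid_complexity_def intv_y_def by simp
  also have "\<dots> \<le> hpw \<pi>"
    unfolding hpw_def using assms False by (intro Max_ge) auto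
  finally show ?thesis .
qed

lemma intervalicity_image_interval_le:
  assumes "is_perm \<pi>" "1 \<le> s" "s \<le> e" "e \<le> fst \<pi>"
  shows "intervalicity (snd \<pi> ` {s..e}) \<le> 2 * hpw \<pi>"
proof -
  have "inj (snd \<pi>)" using assms(1) permutes_inj unfolding is_perm_def by blast
  moreover have "{s..e} = {1..e} - {1..s-1}" using assms(2) by auto
  ultimately have "snd \<pi> ` {s..e} = snd \<pi> ` {1..e} - snd \<pi> ` {1..s-1}"
    by (simp add: image_set_diff)
  then have "intervalicity (snd \<pi> ` {s..e})
      \<le> intervalicity (snd \<pi> ` {1..e}) + intervalicity (snd \<pi> ` {1..s-1})"
    by (simp add: intervalicity_diff_le)
  also have "\<dots> \<le> hpw \<pi> + hpw \<pi>"
    using assms by (intro add_mono intervalicity_image_prefix_le_hpw) auto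
  finally show ?thesis by simp
qed

lemma intv_y_le_hpw_intv_x:
  assumes "is_perm \<pi>" "S \<subseteq> diagram \<pi>"
  shows "intv_y S \<le> 2 * hpw \<pi> * intv_x S"
proof -
  define X where "X = fst ` S"
  have X_sub: "X \<subseteq> {1..fst \<pi>}" using assms(2) unfolding X_def diagram_def by auto
  then have fin: "finite X" using finite_subset by blast
  have fin_runs: "finite (snd \<pi> ` maximal_run X s)" for s
    using fin maximal_run_subset by (meson finite_imageI finite_subset)
  have "snd ` S = snd \<pi> ` X" using assms(2) unfolding X_def diagram_def by force
  also have "\<dots> = snd \<pi> ` (\<Union>s\<in>run_starts X. maximal_run X s)" by (simp only: UN_maximal_runs)
  also have "\<dots> = (\<Union>s\<in>run_starts X. snd \<pi> ` maximal_run X s)" by (rule image_UN)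
  finally have "intv_y S \<le> (\<Sum>s\<in>run_starts X. intervalicity (snd \<pi> ` maximal_run X s))"
    unfolding intv_y_def using intervalicity_UN_le[OF finite_run_starts[OF fin] fin_runs] by simp
  also have "\<dots> \<le> (\<Sum>s\<in>run_starts X. 2 * hpw \<pi>)"
  proof (rule sum_mono)
    fix s assume s: "s \<in> run_starts X"
    then have "s \<in> X" by (simp add: run_starts_def)
    then obtain e where e: "s \<le> e" "e \<in> X" "maximal_run X s = {s..e}"
      using maximal_run_eq_atLeastAtMost[OF fin] by metis
    have "1 \<le> s" "e \<le> fst \<pi>" using X_sub \<open>s \<in> X\<close> \<open>e \<in> X\<close> by auto
    then show "intervalicity (snd \<pi> ` maximal_run X s) \<le> 2 * hpw \<pi>"
      using e assms(1) by (simp add: intervalicity_image_interval_le)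
  qed
  also have "\<dots> = 2 * hpw \<pi> * intv_x S"
    using fin by (simp add: intv_x_def X_def intervalicity_eq_card_run_starts)
  finally show ?thesis .
qed

theorem mainTheorem11:
  fixes C :: "(nat \<times> (nat \<Rightarrow> nat)) set"
  assumes "perm_class C" and "bounded_hpw C"
  shows "\<exists>\<alpha>::real. \<forall>\<pi>\<in>C. \<forall>S. S \<subseteq> diagram \<pi> \<longrightarrow>
           real (intv_y S) \<le> \<alpha> * real (intv_x S)"
proof -
  obtain B where B: "\<forall>\<pi>\<in>C. hpw \<pi> \<le> B" using assms(2) bounded_hpw_def by auto
  have "real (intv_y S) \<le> real (2 * B) * real (intv_x S)" if "\<pi> \<in> C" "S \<subseteq> diagram \<pi>" for \<pi> S
  proof -
    have "intv_y S \<le> 2 * hpw \<pi> * intv_x S"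
      using assms(1) that by (intro intv_y_le_hpw_intv_x) (auto simp: perm_class_def)
    also have "\<dots> \<le> 2 * B * intv_x S" using B that(1) by simp
    finally show ?thesis by (metis of_nat_le_iff of_nat_mult)
  qed
  then show ?thesis by (intro exI[of _ "real (2 * B)"]) blast
qed

end
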